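(* Let $G=(V,E)$ be a finite simple graph of order $n$ with adjacency matrix $A$ having eigenvalues $\lambda_1\ge\cdots\ge\lambda_n$, let $k\ge1$, and let $p\in\mathbb{R}_k[x]$. Set $W(p):=\max_{u\in V}(p(A))_{uu}$ and $w(p):=\min_{u\in V}(p(A))_{uu}$. Then $$\chi_{kq}(G)\ \ge\ \frac{n}{\min\{\,|\{i : p(\lambda_i)\ge w(p)\}|,\ |\{i : p(\lambda_i)\le W(p)\}|\,\}}.$$
   Context: $\mathbb{R}_k[x]$ denotes the real polynomials of degree at most $k$. $\mathrm{dist}(v,w)$ is the graph distance in $G$, $[c]=\{1,\dots,c\}$. A quantum $k$-distance $c$-coloring of $G$ is a collection of orthogonal projectors $\{P_{v,h} : v\in V, h\in[c]\}$ in $\mathbb{C}^{d\times d}$ (for some $d\ge 1$) with $\sum_{h\in[c]}P_{v,h}=I_d$ for each $v\in V$ and $P_{v,h}P_{w,h}=0$ for all distinct $v,w$ with $\mathrm{dist}(v,w)\le k$ and all $h$. The quantum $k$-distance chromatic number $\chi_{kq}(G)$ is the smallest $c$ for which such a coloring exists for some $d>0$; equivalently it is the quantum chromatic number of the $k$-th power graph $G^k$ (same vertex set, distinct vertices adjacent iff at distance at most $k$ in $G$). *)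

theory Defs
  imports "Jordan_Normal_Form.Matrix" "Jordan_Normal_Form.Char_Poly"
begin

definition simple_graph :: "nat \<Rightarrow> (nat \<Rightarrow> nat \<Rightarrow> bool) \<Rightarrow> bool" where
  "simple_graph n E \<longleftrightarrow> (\<forall>u v. E u v \<longrightarrow> u < n \<and> v < n \<and> u \<noteq> v \<and> E v u)"

definition adj_matrix :: "nat \<Rightarrow> (nat \<Rightarrow> nat \<Rightarrow> bool) \<Rightarrow> real mat" where
  "adj_matrix n E = mat n n (\<lambda>(u,v). if E u v then 1 else 0)"

definition dist_le :: "(nat \<Rightarrow> nat \<Rightarrow> bool) \<Rightarrow> nat \<Rightarrow> nat \<Rightarrow> nat \<Rightarrow> bool" where
  "dist_le E k u v \<longleftrightarrow> (\<exists>j\<le>k. (E ^^ j) u v)"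

definition poly_mat :: "real poly \<Rightarrow> real mat \<Rightarrow> real mat" where
  "poly_mat p A = mat (dim_row A) (dim_col A)
     (\<lambda>(u,v). \<Sum>i\<le>degree p. coeff p i * (A ^\<^sub>m i) $$ (u,v))"

definition conj_transp :: "complex mat \<Rightarrow> complex mat" where
  "conj_transp P = mat (dim_col P) (dim_row P) (\<lambda>(i,j). cnj (P $$ (j,i)))"

definition orth_projector :: "nat \<Rightarrow> complex mat \<Rightarrow> bool" where
  "orth_projector d P \<longleftrightarrow> P \<in> carrier_mat d d \<and> P * P = P \<and> conj_transp P = P"

definition quantum_kdist_coloring ::
  "nat \<Rightarrow> (nat \<Rightarrow> nat \<Rightarrow> bool) \<Rightarrow> nat \<Rightarrow> nat \<Rightarrow> nat \<Rightarrow> (nat \<Rightarrow> nat \<Rightarrow> complex mat) \<Rightarrow> bool" where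
  "quantum_kdist_coloring n E k c d P \<longleftrightarrow>
     (\<forall>v<n. \<forall>h\<in>{1..c}. orth_projector d (P v h)) \<and>
     (\<forall>v<n. \<forall>i<d. \<forall>j<d. (\<Sum>h\<in>{1..c}. P v h $$ (i,j)) = (1\<^sub>m d) $$ (i,j)) \<and>
     (\<forall>v<n. \<forall>w<n. \<forall>h\<in>{1..c}. v \<noteq> w \<and> dist_le E k v w \<longrightarrow> P v h * P w h = 0\<^sub>m d d)"

definition quantum_kdist_chromatic :: "nat \<Rightarrow> (nat \<Rightarrow> nat \<Rightarrow> bool) \<Rightarrow> nat \<Rightarrow> nat" where
  "quantum_kdist_chromatic n E k =
     (LEAST c. \<exists>d>0. \<exists>P. quantum_kdist_coloring n E k c d P)"

end

theory Submission
  imports Defs "Jordan_Normal_Form.Schur_Decomposition"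
begin

text \<open>
  Diagonalise the adjacency matrix orthonormally, \<open>A = \<Sum>\<^sub>i \<lambda>\<^sub>i q\<^sub>i q\<^sub>i\<^sup>T\<close>, so that
  \<open>M = p(A) = \<Sum>\<^sub>i p(\<lambda>\<^sub>i) q\<^sub>i q\<^sub>i\<^sup>T\<close>; since \<open>deg p \<le> k\<close>, an off-diagonal entry \<open>M\<^sub>u\<^sub>v\<close> is nonzero only if
  \<open>u\<close> and \<open>v\<close> are at distance at most \<open>k\<close>.  Let \<open>P\<^sub>u\<^sub>h\<close> be a quantum \<open>k\<close>-distance coloring with
  \<open>c\<close> colors in \<open>\<complex>\<^sup>d\<close>, let \<open>t \<le> M\<^sub>u\<^sub>u\<close> for all \<open>u\<close> and \<open>S = {i. p(\<lambda>\<^sub>i) \<ge> t}\<close>.  If \<open>n > c |S|\<close>, the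
  \<open>c d |S|\<close> linear conditions \<open>\<Sum>\<^sub>u q\<^sub>i(u) P\<^sub>u\<^sub>h F\<^sub>u = 0\<close> (\<open>h \<le> c\<close>, \<open>i \<in> S\<close>) on the \<open>n d\<close> entries of
  \<open>F = (F\<^sub>u)\<^sub>u\<close> have a solution \<open>F \<noteq> 0\<close>.  Now evaluate
  \<open>\<Phi> = \<Sum>\<^sub>h \<Sum>\<^sub>u \<Sum>\<^sub>v (M - t I)\<^sub>u\<^sub>v (P\<^sub>u\<^sub>h F\<^sub>u)\<^sup>* (P\<^sub>v\<^sub>h F\<^sub>v)\<close> in two ways.  Projectors of distinct vertices
  at distance at most \<open>k\<close> are orthogonal and \<open>\<Sum>\<^sub>h P\<^sub>u\<^sub>h = I\<close>, so \<open>\<Phi> = \<Sum>\<^sub>u (M\<^sub>u\<^sub>u - t) |F\<^sub>u|\<^sup>2 \<ge> 0\<close>.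
  Expanding \<open>M - t I\<close> spectrally, \<open>\<Phi> = \<Sum>\<^sub>h \<Sum>\<^sub>i (p(\<lambda>\<^sub>i) - t) |\<Sum>\<^sub>u q\<^sub>i(u) P\<^sub>u\<^sub>h F\<^sub>u|\<^sup>2\<close>, where each term is zero
  (\<open>i \<in> S\<close>) or nonpositive.  So all terms vanish, hence every \<open>P\<^sub>u\<^sub>h F\<^sub>u\<close> is zero and
  \<open>F\<^sub>u = \<Sum>\<^sub>h P\<^sub>u\<^sub>h F\<^sub>u = 0\<close>, a contradiction.  Thus \<open>n \<le> \<chi> |S|\<close>; the theorem follows by taking \<open>p\<close>
  with \<open>t = w\<close> and \<open>-p\<close> with \<open>t = -W\<close>.
\<close>

section \<open>Spectral decomposition of symmetric matrices\<close>

lemma homogeneous_system_nontrivial_solution: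
  fixes g :: "'r \<Rightarrow> 'x \<Rightarrow> 'a::field"
  assumes fR: "finite R" and fX: "finite X" and lt: "card R < card X"
  shows "\<exists>F. (\<exists>x\<in>X. F x \<noteq> 0) \<and> (\<forall>r\<in>R. (\<Sum>x\<in>X. g r x * F x) = 0)"
proof -
  define N where "N = card X"
  define m where "m = card R"
  obtain eX where eX: "bij_betw eX {0..<N} X"
    using ex_bij_betw_nat_finite[OF fX] N_def by (metis atLeast0LessThan)
  obtain eR where eR: "bij_betw eR {0..<m} R"
    using ex_bij_betw_nat_finite[OF fR] m_def by (metis atLeast0LessThan)
  have mN: "m < N" using lt by (simp add: m_def N_def)
  \<comment> \<open>the coefficient matrix padded with zero rows: square and singular\<close>
  define Mt where "Mt = mat N N (\<lambda>(i,j). if i < m then g (eR i) (eX j) else (0::'a))"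
  have Mt: "Mt \<in> carrier_mat N N" unfolding Mt_def by auto
  have "Mt = mat\<^sub>r N N (\<lambda>i. if i = N - 1 then 0\<^sub>v N else row Mt i)"
    by (rule eq_matI) (use mN in \<open>auto simp: Mt_def\<close>)
  hence "det Mt = 0" using det_row_0[of "N - 1" N "\<lambda>i. row Mt i"] mN Mt by auto
  then obtain v where v: "v \<in> carrier_vec N" "v \<noteq> 0\<^sub>v N" "Mt *\<^sub>v v = 0\<^sub>v N"
    using det_0_iff_vec_prod_zero_field[OF Mt] by auto
  define F where "F = (\<lambda>x. v $ (inv_into {0..<N} eX x))"
  have F_eX: "F (eX j) = v $ j" if "j < N" for j
    using eX that unfolding F_def by (simp add: bij_betw_inv_into_left)
  have sum_X: "(\<Sum>x\<in>X. f x) = (\<Sum>j<N. f (eX j))" for f :: "'x \<Rightarrow> 'a"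
    using sum.reindex_bij_betw[OF eX, of f] by (simp add: atLeast0LessThan)
  from v obtain j where j: "j < N" "v $ j \<noteq> 0" by (metis eq_vecI index_zero_vec(1,2) carrier_vecD)
  show ?thesis
  proof (intro exI conjI bexI ballI)
    show "F (eX j) \<noteq> 0" using F_eX j by auto
    show "eX j \<in> X" using eX j by (auto simp: bij_betw_def)
    fix r assume "r \<in> R"
    then obtain i where i: "i < m" "eR i = r" using eR by (auto simp: bij_betw_def image_iff)
    have "(Mt *\<^sub>v v) $ i = (\<Sum>j<N. g r (eX j) * v $ j)"
      using i mN v(1) by (auto simp: Mt_def scalar_prod_def row_def atLeast0LessThan intro!: sum.cong)
    moreover have "(Mt *\<^sub>v v) $ i = 0" using v(3) i mN by auto
    ultimately show "(\<Sum>x\<in>X. g r x * F x) = 0" by (simp add: sum_X F_eX)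
  qed
qed

lemma sum_mult_mat_assoc:
  fixes X Y :: "'a::comm_ring_1 mat"
  assumes X: "X \<in> carrier_mat n m" and Y: "Y \<in> carrier_mat m l" and i: "i < n"
  shows "(\<Sum>j<m. X $$ (i,j) * (\<Sum>k<l. Y $$ (j,k) * f k)) = (\<Sum>k<l. (X * Y) $$ (i,k) * f k)"
proof -
  have "(\<Sum>k<l. (X * Y) $$ (i,k) * f k) = (\<Sum>k<l. (\<Sum>j<m. X $$ (i,j) * Y $$ (j,k)) * f k)"
    using X Y i by (auto simp: scalar_prod_def atLeast0LessThan intro!: sum.cong)
  also have "\<dots> = (\<Sum>j<m. X $$ (i,j) * (\<Sum>k<l. Y $$ (j,k) * f k))"
    by (simp add: sum_distrib_left sum_distrib_right mult.assoc sum.swap[of _ "{..<l}"])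
  finally show ?thesis by simp
qed

lemma upper_triangular_coordinates_shift:
  fixes A B Q :: "'a::comm_ring_1 mat"
  assumes A: "A \<in> carrier_mat n n" and B: "B \<in> carrier_mat n n" and Q: "Q \<in> carrier_mat n n"
    and QA: "Q * A = B * Q" and ut: "upper_triangular B"
    and x: "\<And>i. Suc j \<le> i \<Longrightarrow> i < n \<Longrightarrow> (\<Sum>v<n. Q $$ (i,v) * x v) = 0"
    and i: "j \<le> i" "i < n"
  shows "(\<Sum>v<n. Q $$ (i,v) * ((\<Sum>w<n. A $$ (v,w) * x w) - B $$ (j,j) * x v)) = 0"
proof -
  define Qx where "Qx l = (\<Sum>v<n. Q $$ (l,v) * x v)" for l
  have "(\<Sum>v<n. Q $$ (i,v) * (\<Sum>w<n. A $$ (v,w) * x w)) = (\<Sum>w<n. (B * Q) $$ (i,w) * x w)"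
    unfolding QA[symmetric] by (rule sum_mult_mat_assoc[OF Q A i(2)])
  also have "\<dots> = (\<Sum>l<n. B $$ (i,l) * Qx l)"
    unfolding Qx_def by (rule sum_mult_mat_assoc[OF B Q i(2), symmetric])
  also have "\<dots> = (\<Sum>l<n. if l = i then B $$ (i,i) * Qx i else 0)"
  proof (rule sum.cong[OF refl])
    fix l assume "l \<in> {..<n}"
    then show "B $$ (i,l) * Qx l = (if l = i then B $$ (i,i) * Qx i else 0)"
      using ut B i x[of l] unfolding Qx_def upper_triangular_def
      by (cases "l < i") auto
  qed
  also have "\<dots> = B $$ (i,i) * Qx i" using i by simp
  also have "\<dots> = B $$ (j,j) * Qx i" using x[of i] i unfolding Qx_def by (cases "i = j") auto
  finally show ?thesis
    unfolding Qx_def by (simp add: algebra_simps sum_subtractf sum_distrib_left)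
qed

lemma schur_triangularization:
  fixes A :: "'a::conjugatable_ordered_field mat"
  assumes A: "A \<in> carrier_mat n n" and cp: "char_poly A = (\<Prod>l\<leftarrow>lam. [:- l, 1:])"
  obtains B P Q where "B \<in> carrier_mat n n" "P \<in> carrier_mat n n" "Q \<in> carrier_mat n n"
    "P * Q = 1\<^sub>m n" "Q * A = B * Q" "upper_triangular B"
proof -
  obtain B P Q where "schur_decomposition A lam = (B,P,Q)"
    by (cases "schur_decomposition A lam") auto
  with schur_decomposition[OF A cp] have sim: "similar_mat_wit A B P Q" and ut: "upper_triangular B"
    by auto
  from sim A have B: "B \<in> carrier_mat n n" and P: "P \<in> carrier_mat n n" and Q: "Q \<in> carrier_mat n n"
    and PQ: "P * Q = 1\<^sub>m n" and QP: "Q * P = 1\<^sub>m n" and APBQ: "A = P * B * Q"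
    by (auto simp: similar_mat_wit_def Let_def)
  have "Q * A = (Q * P) * (B * Q)"
    using P B Q by (simp add: APBQ assoc_mult_mat[of _ n n _ n _ n])
  then have "Q * A = B * Q" using B Q by (simp add: QP)
  from B P Q PQ this ut show ?thesis by (rule that)
qed

text \<open>In the coordinates of a Schur decomposition \<open>A = P B Q\<close> take a nonzero \<open>x \<in> L\<close> whose
  coordinates vanish from the least possible index \<open>j + 1\<close> on.  Then \<open>A x - B\<^sub>j\<^sub>j x \<in> L\<close> has
  coordinates vanishing from \<open>j\<close> on, so by minimality it is zero.\<close>

lemma invariant_subspace_has_eigenvector:
  fixes A :: "'a::conjugatable_ordered_field mat" and L :: "(nat \<Rightarrow> 'a) set"
  assumes A: "A \<in> carrier_mat n n" and cp: "char_poly A = (\<Prod>l\<leftarrow>lam. [:- l, 1:])"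
    and invariant: "\<And>x c. x \<in> L \<Longrightarrow> (\<lambda>u. (\<Sum>v<n. A $$ (u,v) * x v) - c * x u) \<in> L"
    and x0: "x0 \<in> L" "\<exists>u<n. x0 u \<noteq> 0"
  shows "\<exists>x\<in>L. (\<exists>u<n. x u \<noteq> 0) \<and> (\<exists>\<mu>. \<forall>u<n. (\<Sum>v<n. A $$ (u,v) * x v) = \<mu> * x u)"
proof -
  obtain B P Q where B: "B \<in> carrier_mat n n" and P: "P \<in> carrier_mat n n" and Q: "Q \<in> carrier_mat n n"
    and PQ: "P * Q = 1\<^sub>m n" and QA: "Q * A = B * Q" and ut: "upper_triangular B"
    using schur_triangularization[OF A cp] .
  define Qx where "Qx x i = (\<Sum>v<n. Q $$ (i,v) * x v)" for x :: "nat \<Rightarrow> 'a" and i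
  have zero_if_Qx_zero: "x u = 0" if "\<forall>i<n. Qx x i = 0" "u < n" for x u
  proof -
    have "x u = (\<Sum>v<n. if u = v then x v else 0)" using \<open>u < n\<close> by simp
    also have "\<dots> = (\<Sum>v<n. (P * Q) $$ (u,v) * x v)"
      using \<open>u < n\<close> by (intro sum.cong) (auto simp: PQ)
    also have "\<dots> = (\<Sum>i<n. P $$ (u,i) * Qx x i)"
      unfolding Qx_def by (rule sum_mult_mat_assoc[OF P Q \<open>u < n\<close>, symmetric])
    finally show ?thesis using that by simp
  qed
  define J where "J = {j. \<exists>x\<in>L. (\<exists>u<n. x u \<noteq> 0) \<and> (\<forall>i. j \<le> i \<and> i < n \<longrightarrow> Qx x i = 0)}"
  have "n \<in> J" using x0 unfolding J_def by auto
  define j0 where "j0 = (LEAST j. j \<in> J)"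
  have "j0 \<in> J" unfolding j0_def using \<open>n \<in> J\<close> by (rule LeastI)
  then obtain x where x: "x \<in> L" "\<exists>u<n. x u \<noteq> 0" and x_Qx: "\<And>i. j0 \<le> i \<Longrightarrow> i < n \<Longrightarrow> Qx x i = 0"
    unfolding J_def by auto
  have "j0 \<noteq> 0"
  proof
    assume "j0 = 0"
    then have "\<forall>u<n. x u = 0" using zero_if_Qx_zero[of x] x_Qx by simp
    then show False using x(2) by auto
  qed
  then obtain j where j: "j0 = Suc j" using not0_implies_Suc by blast
  define z where "z u = (\<Sum>v<n. A $$ (u,v) * x v) - B $$ (j,j) * x u" for u
  have "z \<in> L" unfolding z_def using invariant[OF x(1)] .
  have z_Qx: "Qx z i = 0" if "j \<le> i" "i < n" for i
  proof -
    have "\<And>i. Suc j \<le> i \<Longrightarrow> i < n \<Longrightarrow> (\<Sum>v<n. Q $$ (i,v) * x v) = 0"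
      using x_Qx j unfolding Qx_def by simp
    from upper_triangular_coordinates_shift[OF A B Q QA ut this that]
    show ?thesis unfolding Qx_def z_def .
  qed
  have "j < j0" using j by simp
  then have "j \<notin> J" unfolding j0_def by (rule not_less_Least)
  with \<open>z \<in> L\<close> z_Qx have "\<forall>u<n. z u = 0" unfolding J_def by blast
  then have "\<forall>u<n. (\<Sum>v<n. A $$ (u,v) * x v) = B $$ (j,j) * x u" unfolding z_def by simp
  then show ?thesis using x by blast
qed

definition orthonormal_family :: "nat \<Rightarrow> nat \<Rightarrow> (nat \<Rightarrow> nat \<Rightarrow> real) \<Rightarrow> bool" where
  "orthonormal_family n k q \<longleftrightarrow>
     (\<forall>i<k. \<forall>j<k. (\<Sum>u<n. q i u * q j u) = (if i = j then 1 else 0))"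

definition eigen_family :: "real mat \<Rightarrow> nat \<Rightarrow> nat \<Rightarrow> (nat \<Rightarrow> nat \<Rightarrow> real) \<Rightarrow> (nat \<Rightarrow> real) \<Rightarrow> bool" where
  "eigen_family A n k q \<nu> \<longleftrightarrow> (\<forall>i<k. \<forall>u<n. (\<Sum>v<n. A $$ (u,v) * q i v) = \<nu> i * q i u)"

lemma orthonormal_family_extend:
  assumes "orthonormal_family n k q" and "\<forall>i<k. (\<Sum>u<n. q i u * y u) = 0"
    and "(\<Sum>u<n. y u * y u) = 1"
  shows "orthonormal_family n (Suc k) (q(k := y))"
proof -
  have "(\<Sum>u<n. y u * q i u) = 0" if "i < k" for i
    using assms(2) that by (simp add: mult.commute)
  then show ?thesis
    using assms unfolding orthonormal_family_def by (auto simp: less_Suc_eq)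
qed

lemma eigen_family_extend:
  assumes "eigen_family A n k q \<nu>" and "\<forall>u<n. (\<Sum>v<n. A $$ (u,v) * y v) = \<mu> * y u"
  shows "eigen_family A n (Suc k) (q(k := y)) (\<nu>(k := \<mu>))"
  using assms unfolding eigen_family_def by (auto simp: less_Suc_eq)

lemma symmetric_mat_eigenvector_inner:
  fixes A :: "real mat"
  assumes sym: "\<And>u v. u < n \<Longrightarrow> v < n \<Longrightarrow> A $$ (u,v) = A $$ (v,u)"
    and eig: "\<And>v. v < n \<Longrightarrow> (\<Sum>u<n. A $$ (v,u) * y u) = \<mu> * y v"
  shows "(\<Sum>u<n. y u * (\<Sum>v<n. A $$ (u,v) * x v)) = \<mu> * (\<Sum>v<n. y v * x v)"
proof -
  have "(\<Sum>u<n. y u * (\<Sum>v<n. A $$ (u,v) * x v)) = (\<Sum>u<n. \<Sum>v<n. y u * A $$ (u,v) * x v)"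
    by (simp add: sum_distrib_left mult.assoc)
  also have "\<dots> = (\<Sum>v<n. \<Sum>u<n. y u * A $$ (u,v) * x v)" by (rule sum.swap)
  also have "\<dots> = (\<Sum>v<n. (\<Sum>u<n. A $$ (v,u) * y u) * x v)"
    by (auto simp: sum_distrib_left sum_distrib_right sym mult_ac intro!: sum.cong)
  also have "\<dots> = (\<Sum>v<n. \<mu> * y v * x v)" by (intro sum.cong) (simp_all add: eig)
  also have "\<dots> = \<mu> * (\<Sum>v<n. y v * x v)" by (simp add: sum_distrib_left mult.assoc)
  finally show ?thesis .
qed

lemma exists_unit_multiple:
  fixes x :: "nat \<Rightarrow> real"
  assumes "\<exists>u<n. x u \<noteq> 0"
  obtains s where "s > 0" "(\<Sum>u<n. x u / s * (x u / s)) = 1"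
proof
  from assms obtain u where u: "u < n" "x u \<noteq> 0" by auto
  have "0 < x u * x u" using u(2) by (auto simp: zero_less_mult_iff linorder_neq_iff)
  also have "\<dots> \<le> (\<Sum>u<n. x u * x u)" by (rule member_le_sum) (use u in auto)
  finally have pos: "0 < (\<Sum>u<n. x u * x u)" .
  then show "0 < sqrt (\<Sum>u<n. x u * x u)" by simp
  show "(\<Sum>u<n. x u / sqrt (\<Sum>u<n. x u * x u) * (x u / sqrt (\<Sum>u<n. x u * x u))) = 1"
    using pos by (simp add: sum_divide_distrib[symmetric])
qed

lemma orthonormal_eigen_family_extend:
  fixes A :: "real mat"
  assumes A: "A \<in> carrier_mat n n" and A_sym: "\<And>u v. u < n \<Longrightarrow> v < n \<Longrightarrow> A $$ (u,v) = A $$ (v,u)"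
    and cp: "char_poly A = (\<Prod>l\<leftarrow>lam. [:- l, 1:])"
    and "k < n" and orth: "orthonormal_family n k q" and eig: "eigen_family A n k q \<nu>"
  shows "\<exists>y \<mu>. orthonormal_family n (Suc k) (q(k := y)) \<and>
               eigen_family A n (Suc k) (q(k := y)) (\<nu>(k := \<mu>))"
proof -
  define L where "L = {x. \<forall>i<k. (\<Sum>u<n. q i u * x u) = 0}"
  have "\<exists>x. (\<exists>u\<in>{..<n}. x u \<noteq> 0) \<and> (\<forall>i\<in>{..<k}. (\<Sum>u\<in>{..<n}. q i u * x u) = 0)"
    by (rule homogeneous_system_nontrivial_solution) (use \<open>k < n\<close> in auto)
  then obtain x0 where x0: "x0 \<in> L" "\<exists>u<n. x0 u \<noteq> 0" unfolding L_def by auto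
  have invariant: "(\<lambda>u. (\<Sum>v<n. A $$ (u,v) * x v) - c * x u) \<in> L" if "x \<in> L" for x c
  proof -
    have "(\<Sum>u<n. q i u * ((\<Sum>v<n. A $$ (u,v) * x v) - c * x u)) = 0" if "i < k" for i
    proof -
      have "(\<Sum>u<n. q i u * (\<Sum>v<n. A $$ (u,v) * x v)) = \<nu> i * (\<Sum>u<n. q i u * x u)"
        by (rule symmetric_mat_eigenvector_inner[OF A_sym]) (use eig \<open>i < k\<close> in \<open>auto simp: eigen_family_def\<close>)
      moreover have "(\<Sum>u<n. q i u * x u) = 0" using \<open>x \<in> L\<close> \<open>i < k\<close> by (simp add: L_def)
      moreover have "(\<Sum>u<n. q i u * ((\<Sum>v<n. A $$ (u,v) * x v) - c * x u))
          = (\<Sum>u<n. q i u * (\<Sum>v<n. A $$ (u,v) * x v)) - c * (\<Sum>u<n. q i u * x u)"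
        by (simp add: right_diff_distrib sum_subtractf sum_distrib_left mult.left_commute)
      ultimately show ?thesis by simp
    qed
    then show ?thesis unfolding L_def by simp
  qed
  obtain x \<mu> where x: "x \<in> L" "\<exists>u<n. x u \<noteq> 0"
    and x_eig: "\<forall>u<n. (\<Sum>v<n. A $$ (u,v) * x v) = \<mu> * x u"
    using invariant_subspace_has_eigenvector[OF A cp invariant x0] by blast
  obtain s where s: "s > 0" "(\<Sum>u<n. x u / s * (x u / s)) = 1"
    using exists_unit_multiple[OF x(2)] by blast
  have "orthonormal_family n (Suc k) (q(k := \<lambda>u. x u / s))"
    by (rule orthonormal_family_extend[OF orth _ s(2)])
       (use x(1) in \<open>simp add: L_def sum_divide_distrib[symmetric]\<close>)
  moreover have "eigen_family A n (Suc k) (q(k := \<lambda>u. x u / s)) (\<nu>(k := \<mu>))"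
    by (rule eigen_family_extend[OF eig]) (simp add: x_eig sum_divide_distrib[symmetric])
  ultimately show ?thesis by blast
qed

lemma orthonormal_eigenbasis_exists:
  fixes A :: "real mat"
  assumes A: "A \<in> carrier_mat n n" and A_sym: "\<And>u v. u < n \<Longrightarrow> v < n \<Longrightarrow> A $$ (u,v) = A $$ (v,u)"
    and cp: "char_poly A = (\<Prod>l\<leftarrow>lam. [:- l, 1:])"
  shows "\<exists>q \<nu>. orthonormal_family n n q \<and> eigen_family A n n q \<nu>"
proof -
  have "k \<le> n \<Longrightarrow> \<exists>q \<nu>. orthonormal_family n k q \<and> eigen_family A n k q \<nu>" for k
  proof (induction k)
    case 0
    show ?case by (auto simp: orthonormal_family_def eigen_family_def)
  next
    case (Suc k)
    then obtain q \<nu> where "orthonormal_family n k q" "eigen_family A n k q \<nu>" by auto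
    then have "\<exists>y \<mu>. orthonormal_family n (Suc k) (q(k := y)) \<and>
                 eigen_family A n (Suc k) (q(k := y)) (\<nu>(k := \<mu>))"
      by (intro orthonormal_eigen_family_extend[OF A A_sym cp]) (use Suc.prems in auto)
    then show ?case by blast
  qed
  then show ?thesis by blast
qed

lemma orthonormal_family_mat_orthogonal:
  assumes "orthonormal_family n n q"
  defines "U \<equiv> mat n n (\<lambda>(u,i). q i u)"
  shows "transpose_mat U * U = 1\<^sub>m n" and "U * transpose_mat U = 1\<^sub>m n"
proof -
  show UTU: "transpose_mat U * U = 1\<^sub>m n"
    by (rule eq_matI)
       (use assms(1) in \<open>auto simp: U_def orthonormal_family_def scalar_prod_def atLeast0LessThan\<close>)
  show "U * transpose_mat U = 1\<^sub>m n"
    by (rule mat_mult_left_right_inverse[OF _ _ UTU]) (simp_all add: U_def)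
qed

lemma orthonormal_family_complete:
  assumes "orthonormal_family n n q" and "u < n" "v < n"
  shows "(\<Sum>i<n. q i u * q i v) = (if u = v then 1 else 0)"
proof -
  have "(\<Sum>i<n. q i u * q i v) = (mat n n (\<lambda>(u,i). q i u) * transpose_mat (mat n n (\<lambda>(u,i). q i u))) $$ (u,v)"
    using assms(2,3) by (auto simp: scalar_prod_def atLeast0LessThan)
  then show ?thesis using orthonormal_family_mat_orthogonal(2)[OF assms(1)] assms(2,3) by simp
qed

lemma orthonormal_eigenbasis_char_poly:
  fixes A :: "real mat"
  assumes A: "A \<in> carrier_mat n n"
    and orth: "orthonormal_family n n q" and eig: "eigen_family A n n q \<nu>"
  shows "char_poly A = (\<Prod>l\<leftarrow>map \<nu> [0..<n]. [:- l, 1:])"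
proof -
  define U where "U = mat n n (\<lambda>(u,i). q i u)"
  define D where "D = mat n n (\<lambda>(i,j). if i = j then \<nu> i else 0)"
  have U: "U \<in> carrier_mat n n" and UT: "transpose_mat U \<in> carrier_mat n n"
    and D: "D \<in> carrier_mat n n"
    unfolding U_def D_def by auto
  note UTU = orthonormal_family_mat_orthogonal(1)[OF orth, folded U_def]
  note UUT = orthonormal_family_mat_orthogonal(2)[OF orth, folded U_def]
  have AU: "A * U = U * D"
  proof (rule eq_matI)
    fix u i assume "u < dim_row (U * D)" and "i < dim_col (U * D)"
    then have u: "u < n" and i: "i < n" using U D by auto
    have "(A * U) $$ (u,i) = (\<Sum>v<n. A $$ (u,v) * q i v)"
      using A u i by (auto simp: U_def scalar_prod_def atLeast0LessThan intro!: sum.cong)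
    also have "\<dots> = \<nu> i * q i u" using eig u i unfolding eigen_family_def by auto
    also have "\<dots> = (U * D) $$ (u,i)"
      using u i by (auto simp: U_def D_def scalar_prod_def atLeast0LessThan if_distrib cong: if_cong)
    finally show "(A * U) $$ (u,i) = (U * D) $$ (u,i)" .
  qed (use A U D in auto)
  have "A = (A * U) * transpose_mat U"
    using A U UT UUT by (simp add: assoc_mult_mat[OF A U UT])
  then have "similar_mat_wit A D U (transpose_mat U)"
    unfolding similar_mat_wit_def Let_def using A U UT D UTU UUT AU by auto
  then have "char_poly A = char_poly D" by (intro char_poly_similar) (auto simp: similar_mat_def)
  also have "\<dots> = (\<Prod>l\<leftarrow>diag_mat D. [:- l, 1:])"
    by (rule char_poly_upper_triangular[OF D]) (auto simp: D_def upper_triangular_def)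
  also have "diag_mat D = map \<nu> [0..<n]" by (auto simp: diag_mat_def D_def)
  finally show ?thesis .
qed

lemma prod_linear_factors_eq_imp_mset_eq:
  fixes xs ys :: "'a::idom list"
  assumes "(\<Prod>l\<leftarrow>xs. [:- l, 1:]) = (\<Prod>l\<leftarrow>ys. [:- l, 1:])"
  shows "mset xs = mset ys"
  using assms
proof (induction xs arbitrary: ys)
  case Nil
  then show ?case
    by (cases ys) (auto dest: arg_cong[where f = "\<lambda>p. poly p (hd ys)"])
next
  case (Cons a xs)
  have "poly (\<Prod>l\<leftarrow>ys. [:- l, 1:]) a = 0" using Cons.prems[symmetric] by simp
  then have a: "a \<in> set ys" by (auto simp: poly_prod_list prod_list_zero_iff)
  then have "(\<Prod>l\<leftarrow>ys. [:- l, 1:]) = [:- a, 1:] * (\<Prod>l\<leftarrow>remove1 a ys. [:- l, 1:])"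
    by (rule prod_list_map_remove1)
  with Cons.prems have "[:- a, 1:] * (\<Prod>l\<leftarrow>xs. [:- l, 1:])
      = [:- a, 1:] * (\<Prod>l\<leftarrow>remove1 a ys. [:- l, 1:])"
    by simp
  then have "(\<Prod>l\<leftarrow>xs. [:- l, 1:]) = (\<Prod>l\<leftarrow>remove1 a ys. [:- l, 1:])"
    by (simp del: mult_pCons_left)
  from Cons.IH[OF this] a show ?case by simp
qed

lemma card_index_filter_mset_eq:
  assumes "mset (map \<nu> [0..<n]) = mset lam"
  shows "card {i. i < n \<and> Q (lam ! i)} = card {i. i < n \<and> Q (\<nu> i)}"
proof -
  have "length lam = n" using arg_cong[OF assms, of size] by simp
  then have "card {i. i < n \<and> Q (lam ! i)} = length (filter Q lam)"
    by (simp add: length_filter_conv_card)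
  also have "\<dots> = length (filter Q (map \<nu> [0..<n]))"
    by (metis assms mset_filter size_mset)
  also have "\<dots> = card {i. i < n \<and> Q (map \<nu> [0..<n] ! i)}"
    by (simp add: length_filter_conv_card)
  also have "\<dots> = card {i. i < n \<and> Q (\<nu> i)}" by (intro arg_cong[where f = card]) auto
  finally show ?thesis .
qed

lemma symmetric_mat_spectral_decomposition:
  fixes A :: "real mat"
  assumes A: "A \<in> carrier_mat n n" and A_sym: "\<And>u v. u < n \<Longrightarrow> v < n \<Longrightarrow> A $$ (u,v) = A $$ (v,u)"
    and cp: "char_poly A = (\<Prod>l\<leftarrow>lam. [:- l, 1:])"
  obtains q \<nu> where "eigen_family A n n q \<nu>"
    and "\<And>u v. u < n \<Longrightarrow> v < n \<Longrightarrow> (\<Sum>i<n. q i u * q i v) = (if u = v then 1 else 0)"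
    and "mset (map \<nu> [0..<n]) = mset lam"
proof -
  obtain q \<nu> where orth: "orthonormal_family n n q" and eig: "eigen_family A n n q \<nu>"
    using orthonormal_eigenbasis_exists[OF A A_sym cp] by blast
  have "mset (map \<nu> [0..<n]) = mset lam"
    using orthonormal_eigenbasis_char_poly[OF A orth eig] cp
    by (intro prod_linear_factors_eq_imp_mset_eq) simp
  with eig orthonormal_family_complete[OF orth] show ?thesis using that by blast
qed

lemma mat_pow_spectral:
  fixes A :: "real mat"
  assumes A: "A \<in> carrier_mat n n" and A_sym: "\<And>u v. u < n \<Longrightarrow> v < n \<Longrightarrow> A $$ (u,v) = A $$ (v,u)"
    and eig: "eigen_family A n n q \<nu>"
    and complete: "\<And>u v. u < n \<Longrightarrow> v < n \<Longrightarrow> (\<Sum>i<n. q i u * q i v) = (if u = v then 1 else 0)"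
    and u: "u < n" and v: "v < n"
  shows "(A ^\<^sub>m j) $$ (u,v) = (\<Sum>i<n. \<nu> i ^ j * q i u * q i v)"
  using v
proof (induction j arbitrary: v)
  case 0
  then show ?case using A u complete by simp
next
  case (Suc j)
  have "(A ^\<^sub>m Suc j) $$ (u,v) = (\<Sum>w<n. (A ^\<^sub>m j) $$ (u,w) * A $$ (w,v))"
    using A u Suc.prems by (auto simp: scalar_prod_def atLeast0LessThan intro!: sum.cong)
  also have "\<dots> = (\<Sum>w<n. \<Sum>i<n. \<nu> i ^ j * q i u * (A $$ (v,w) * q i w))"
    using Suc.IH Suc.prems A_sym by (auto simp: sum_distrib_left sum_distrib_right mult_ac intro!: sum.cong)
  also have "\<dots> = (\<Sum>i<n. \<nu> i ^ j * q i u * (\<Sum>w<n. A $$ (v,w) * q i w))"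
    by (subst sum.swap) (simp add: sum_distrib_left)
  also have "\<dots> = (\<Sum>i<n. \<nu> i ^ Suc j * q i u * q i v)"
    using eig Suc.prems unfolding eigen_family_def by (auto simp: mult_ac intro!: sum.cong)
  finally show ?case .
qed

lemma poly_mat_spectral:
  fixes A :: "real mat"
  assumes A: "A \<in> carrier_mat n n" and A_sym: "\<And>u v. u < n \<Longrightarrow> v < n \<Longrightarrow> A $$ (u,v) = A $$ (v,u)"
    and eig: "eigen_family A n n q \<nu>"
    and complete: "\<And>u v. u < n \<Longrightarrow> v < n \<Longrightarrow> (\<Sum>i<n. q i u * q i v) = (if u = v then 1 else 0)"
    and u: "u < n" and v: "v < n"
  shows "poly_mat p A $$ (u,v) = (\<Sum>i<n. poly p (\<nu> i) * q i u * q i v)"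
proof -
  have "poly_mat p A $$ (u,v) = (\<Sum>j\<le>degree p. coeff p j * (\<Sum>i<n. \<nu> i ^ j * q i u * q i v))"
    using A u v by (simp add: poly_mat_def mat_pow_spectral[OF A A_sym eig complete u v])
  also have "\<dots> = (\<Sum>i<n. \<Sum>j\<le>degree p. coeff p j * \<nu> i ^ j * q i u * q i v)"
    by (subst sum.swap) (simp add: sum_distrib_left mult_ac)
  also have "\<dots> = (\<Sum>i<n. poly p (\<nu> i) * q i u * q i v)"
    by (simp add: poly_altdef sum_distrib_right)
  finally show ?thesis .
qed

lemma poly_mat_uminus_entry:
  assumes "u < dim_row A" "v < dim_col A"
  shows "poly_mat (- p) A $$ (u,v) = - poly_mat p A $$ (u,v)"
  using assms by (simp add: poly_mat_def sum_negf)

section \<open>Quantum colorings\<close>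

lemma inner_hermitian_mat_mult:
  fixes P1 P2 :: "complex mat"
  assumes P1: "P1 \<in> carrier_mat d d" and P2: "P2 \<in> carrier_mat d d" and herm: "conj_transp P1 = P1"
  shows "(\<Sum>a<d. cnj (\<Sum>b<d. P1 $$ (a,b) * f b) * (\<Sum>b<d. P2 $$ (a,b) * g b))
       = (\<Sum>b<d. \<Sum>b'<d. cnj (f b) * g b' * (P1 * P2) $$ (b,b'))"
proof -
  have herm_entry: "cnj (P1 $$ (a,b)) = P1 $$ (b,a)" if "a < d" "b < d" for a b
    using arg_cong[OF herm, of "\<lambda>M. M $$ (b,a)"] that P1 by (simp add: conj_transp_def)
  have "(\<Sum>a<d. cnj (\<Sum>b<d. P1 $$ (a,b) * f b) * (\<Sum>b<d. P2 $$ (a,b) * g b))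
      = (\<Sum>a<d. \<Sum>b<d. \<Sum>b'<d. P1 $$ (b,a) * cnj (f b) * (P2 $$ (a,b') * g b'))"
    by (auto simp: cnj_sum herm_entry sum_product intro!: sum.cong)
  also have "\<dots> = (\<Sum>b<d. \<Sum>b'<d. \<Sum>a<d. P1 $$ (b,a) * cnj (f b) * (P2 $$ (a,b') * g b'))"
    by (subst sum.swap) (rule sum.cong[OF refl], rule sum.swap)
  also have "\<dots> = (\<Sum>b<d. \<Sum>b'<d. cnj (f b) * g b' * (P1 * P2) $$ (b,b'))"
    using P1 P2
    by (auto simp: scalar_prod_def atLeast0LessThan sum_distrib_left mult_ac intro!: sum.cong)
  finally show ?thesis .
qed

lemma quantum_coloring_resolves_identity:
  assumes "quantum_kdist_coloring n E k c d P" and "v < n" and "a < d"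
  shows "(\<Sum>h\<in>{1..c}. \<Sum>b<d. P v h $$ (a,b) * f b) = f a"
proof -
  have "(\<Sum>h\<in>{1..c}. \<Sum>b<d. P v h $$ (a,b) * f b) = (\<Sum>b<d. (\<Sum>h\<in>{1..c}. P v h $$ (a,b)) * f b)"
    by (subst sum.swap) (simp add: sum_distrib_right)
  also have "\<dots> = (\<Sum>b<d. if a = b then f b else 0)"
    using assms unfolding quantum_kdist_coloring_def by (intro sum.cong) auto
  finally show ?thesis using assms(3) by simp
qed

lemma cnj_mult_self: "cnj z * z = complex_of_real ((cmod z)\<^sup>2)"
  using complex_norm_square[of z] by (simp add: mult.commute)

lemma spectral_quadratic_form:
  fixes q :: "nat \<Rightarrow> nat \<Rightarrow> real" and \<kappa> :: "nat \<Rightarrow> real" and g :: "nat \<Rightarrow> complex"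
  shows "(\<Sum>u<n. \<Sum>v<n. of_real (\<Sum>i<m. \<kappa> i * q i u * q i v) * (cnj (g u) * g v))
       = of_real (\<Sum>i<m. \<kappa> i * (cmod (\<Sum>u<n. of_real (q i u) * g u))\<^sup>2)"
proof -
  have "(\<Sum>u<n. \<Sum>v<n. of_real (\<Sum>i<m. \<kappa> i * q i u * q i v) * (cnj (g u) * g v))
      = (\<Sum>u<n. \<Sum>v<n. \<Sum>i<m. of_real (\<kappa> i) * ((of_real (q i u) * cnj (g u)) * (of_real (q i v) * g v)))"
    by (simp add: sum_distrib_left sum_distrib_right mult_ac)
  also have "\<dots> = (\<Sum>i<m. \<Sum>u<n. \<Sum>v<n. of_real (\<kappa> i) * ((of_real (q i u) * cnj (g u)) * (of_real (q i v) * g v)))"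
    by (subst sum.swap) (rule sum.cong[OF refl], rule sum.swap)
  also have "\<dots> = (\<Sum>i<m. of_real (\<kappa> i) * ((\<Sum>u<n. of_real (q i u) * cnj (g u)) * (\<Sum>v<n. of_real (q i v) * g v)))"
    by (simp only: sum_product, simp only: sum_distrib_left)
  also have "\<dots> = (\<Sum>i<m. of_real (\<kappa> i) *
      (cnj (\<Sum>u<n. of_real (q i u) * g u) * (\<Sum>u<n. of_real (q i u) * g u)))"
    by (simp add: cnj_sum)
  also have "\<dots> = of_real (\<Sum>i<m. \<kappa> i * (cmod (\<Sum>u<n. of_real (q i u) * g u))\<^sup>2)"
    unfolding cnj_mult_self by simp
  finally show ?thesis .
qed

lemma orthogonal_coordinates_zero:
  fixes q :: "nat \<Rightarrow> nat \<Rightarrow> real" and g :: "nat \<Rightarrow> complex"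
  assumes complete: "\<And>u v. u < n \<Longrightarrow> v < n \<Longrightarrow> (\<Sum>i<n. q i u * q i v) = (if u = v then 1 else 0)"
    and coords: "\<And>i. i < n \<Longrightarrow> (\<Sum>v<n. of_real (q i v) * g v) = 0" and u: "u < n"
  shows "g u = 0"
proof -
  have "g u = (\<Sum>v<n. if u = v then g v else 0)" using u by simp
  also have "\<dots> = (\<Sum>v<n. of_real (\<Sum>i<n. q i u * q i v) * g v)"
    using u by (intro sum.cong) (simp_all add: complete)
  also have "\<dots> = (\<Sum>v<n. \<Sum>i<n. of_real (q i u) * (of_real (q i v) * g v))"
    by (simp add: sum_distrib_right mult.assoc)
  also have "\<dots> = (\<Sum>i<n. of_real (q i u) * (\<Sum>v<n. of_real (q i v) * g v))"
    by (subst sum.swap) (simp add: sum_distrib_left)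
  also have "\<dots> = 0" by (simp add: coords)
  finally show ?thesis .
qed

lemma quantum_coloring_projectors:
  assumes "quantum_kdist_coloring n E k c d P" and "u < n" and "h \<in> {1..c}"
  shows "P u h \<in> carrier_mat d d" "conj_transp (P u h) = P u h" "P u h * P u h = P u h"
  using assms unfolding quantum_kdist_coloring_def orth_projector_def by auto

lemma quantum_coloring_components_orthogonal:
  assumes col: "quantum_kdist_coloring n E k c d P"
    and "u < n" "v < n" "u \<noteq> v" "dist_le E k u v"
  shows "(\<Sum>h\<in>{1..c}. \<Sum>a<d. cnj (\<Sum>b<d. P u h $$ (a,b) * f b) * (\<Sum>b<d. P v h $$ (a,b) * g b)) = 0"
proof (rule sum.neutral, rule ballI)
  fix h assume h: "h \<in> {1..c}"
  have "(\<Sum>a<d. cnj (\<Sum>b<d. P u h $$ (a,b) * f b) * (\<Sum>b<d. P v h $$ (a,b) * g b))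
      = (\<Sum>b<d. \<Sum>b'<d. cnj (f b) * g b' * (P u h * P v h) $$ (b,b'))"
    by (rule inner_hermitian_mat_mult) (use quantum_coloring_projectors[OF col _ h] assms(2,3) in auto)
  moreover have "P u h * P v h = 0\<^sub>m d d"
    using col assms(2-5) h unfolding quantum_kdist_coloring_def by blast
  ultimately show "(\<Sum>a<d. cnj (\<Sum>b<d. P u h $$ (a,b) * f b) * (\<Sum>b<d. P v h $$ (a,b) * g b)) = 0"
    by simp
qed

lemma quantum_coloring_components_norm:
  assumes col: "quantum_kdist_coloring n E k c d P" and u: "u < n"
  shows "(\<Sum>h\<in>{1..c}. \<Sum>a<d. cnj (\<Sum>b<d. P u h $$ (a,b) * f b) * (\<Sum>b<d. P u h $$ (a,b) * f b))
       = of_real (\<Sum>b<d. (cmod (f b))\<^sup>2)"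
proof -
  have "(\<Sum>h\<in>{1..c}. \<Sum>a<d. cnj (\<Sum>b<d. P u h $$ (a,b) * f b) * (\<Sum>b<d. P u h $$ (a,b) * f b))
      = (\<Sum>h\<in>{1..c}. \<Sum>b<d. \<Sum>b'<d. cnj (f b) * f b' * P u h $$ (b,b'))"
  proof (rule sum.cong[OF refl])
    fix h assume "h \<in> {1..c}"
    note proj = quantum_coloring_projectors[OF col u this]
    show "(\<Sum>a<d. cnj (\<Sum>b<d. P u h $$ (a,b) * f b) * (\<Sum>b<d. P u h $$ (a,b) * f b))
        = (\<Sum>b<d. \<Sum>b'<d. cnj (f b) * f b' * P u h $$ (b,b'))"
      by (subst inner_hermitian_mat_mult[OF proj(1,1,2)]) (simp add: proj(3))
  qed
  also have "\<dots> = (\<Sum>b<d. cnj (f b) * (\<Sum>h\<in>{1..c}. \<Sum>b'<d. P u h $$ (b,b') * f b'))"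
    by (subst sum.swap) (simp add: sum_distrib_left mult_ac)
  also have "\<dots> = (\<Sum>b<d. cnj (f b) * f b)"
    using quantum_coloring_resolves_identity[OF col u] by simp
  finally show ?thesis by (simp add: cnj_mult_self)
qed

lemma quantum_coloring_quadratic_form:
  fixes K :: "nat \<Rightarrow> nat \<Rightarrow> real" and F :: "nat \<Rightarrow> nat \<Rightarrow> complex"
  assumes col: "quantum_kdist_coloring n E k c d P"
    and supp: "\<And>u v. u < n \<Longrightarrow> v < n \<Longrightarrow> u \<noteq> v \<Longrightarrow> K u v \<noteq> 0 \<Longrightarrow> dist_le E k u v"
  defines "G \<equiv> \<lambda>h u a. \<Sum>b<d. P u h $$ (a,b) * F u b"
  shows "(\<Sum>h\<in>{1..c}. \<Sum>a<d. \<Sum>u<n. \<Sum>v<n. of_real (K u v) * (cnj (G h u a) * G h v a))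
       = of_real (\<Sum>u<n. K u u * (\<Sum>b<d. (cmod (F u b))\<^sup>2))"
proof -
  define Gram where "Gram u v = (\<Sum>h\<in>{1..c}. \<Sum>a<d. cnj (G h u a) * G h v a)" for u v
  have off_diagonal: "of_real (K u v) * Gram u v = 0" if "u < n" "v < n" "u \<noteq> v" for u v
    using supp[OF that] quantum_coloring_components_orthogonal[OF col that]
    by (cases "K u v = 0") (auto simp: Gram_def G_def)
  have diagonal: "Gram u u = of_real (\<Sum>b<d. (cmod (F u b))\<^sup>2)" if "u < n" for u
    unfolding Gram_def G_def by (rule quantum_coloring_components_norm[OF col that])
  define X where "X h a u v = of_real (K u v) * (cnj (G h u a) * G h v a)" for h a u v
  have "(\<Sum>h\<in>{1..c}. \<Sum>a<d. \<Sum>u<n. \<Sum>v<n. X h a u v) = (\<Sum>h\<in>{1..c}. \<Sum>u<n. \<Sum>a<d. \<Sum>v<n. X h a u v)"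
    by (rule sum.cong[OF refl], rule sum.swap)
  also have "\<dots> = (\<Sum>h\<in>{1..c}. \<Sum>u<n. \<Sum>v<n. \<Sum>a<d. X h a u v)"
    by (rule sum.cong[OF refl], rule sum.cong[OF refl], rule sum.swap)
  also have "\<dots> = (\<Sum>u<n. \<Sum>h\<in>{1..c}. \<Sum>v<n. \<Sum>a<d. X h a u v)"
    by (rule sum.swap)
  also have "\<dots> = (\<Sum>u<n. \<Sum>v<n. \<Sum>h\<in>{1..c}. \<Sum>a<d. X h a u v)"
    by (rule sum.cong[OF refl], rule sum.swap)
  also have "\<dots> = (\<Sum>u<n. \<Sum>v<n. of_real (K u v) * Gram u v)"
    by (simp add: X_def Gram_def sum_distrib_left)
  also have "\<dots> = (\<Sum>u<n. of_real (K u u) * Gram u u)"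
  proof (rule sum.cong[OF refl])
    fix u assume "u \<in> {..<n}"
    then have "(\<Sum>v<n. of_real (K u v) * Gram u v) = (\<Sum>v<n. if v = u then of_real (K u u) * Gram u u else 0)"
      using off_diagonal by (intro sum.cong) auto
    then show "(\<Sum>v<n. of_real (K u v) * Gram u v) = of_real (K u u) * Gram u u"
      using \<open>u \<in> {..<n}\<close> by simp
  qed
  also have "\<dots> = of_real (\<Sum>u<n. K u u * (\<Sum>b<d. (cmod (F u b))\<^sup>2))"
    by (simp add: diagonal)
  finally show ?thesis unfolding X_def .
qed

lemma quantum_coloring_spectral_form_nonneg:
  fixes M q :: "nat \<Rightarrow> nat \<Rightarrow> real" and \<mu> :: "nat \<Rightarrow> real" and F :: "nat \<Rightarrow> nat \<Rightarrow> complex"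
  assumes complete: "\<And>u v. u < n \<Longrightarrow> v < n \<Longrightarrow> (\<Sum>i<n. q i u * q i v) = (if u = v then 1 else 0)"
    and M: "\<And>u v. u < n \<Longrightarrow> v < n \<Longrightarrow> M u v = (\<Sum>i<n. \<mu> i * q i u * q i v)"
    and supp: "\<And>u v. u < n \<Longrightarrow> v < n \<Longrightarrow> u \<noteq> v \<Longrightarrow> M u v \<noteq> 0 \<Longrightarrow> dist_le E k u v"
    and diag: "\<And>u. u < n \<Longrightarrow> t \<le> M u u"
    and col: "quantum_kdist_coloring n E k c d P"
  defines "G \<equiv> \<lambda>h u a. \<Sum>b<d. P u h $$ (a,b) * F u b"
  shows "0 \<le> (\<Sum>h\<in>{1..c}. \<Sum>a<d. \<Sum>i<n. (\<mu> i - t) * (cmod (\<Sum>u<n. of_real (q i u) * G h u a))\<^sup>2)"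
proof -
  define K where "K u v = M u v - (if u = v then t else 0)" for u v
  have K: "K u v = (\<Sum>i<n. (\<mu> i - t) * q i u * q i v)" if "u < n" "v < n" for u v
  proof -
    have "(\<Sum>i<n. (\<mu> i - t) * q i u * q i v) = (\<Sum>i<n. \<mu> i * q i u * q i v) - t * (\<Sum>i<n. q i u * q i v)"
      by (simp add: algebra_simps sum_subtractf sum_distrib_left)
    then show ?thesis using M[OF that] complete[OF that] by (simp add: K_def)
  qed
  define form where
    "form = (\<Sum>h\<in>{1..c}. \<Sum>a<d. \<Sum>u<n. \<Sum>v<n. of_real (K u v) * (cnj (G h u a) * G h v a))"
  have "form = of_real (\<Sum>u<n. K u u * (\<Sum>b<d. (cmod (F u b))\<^sup>2))"
    unfolding form_def G_def
    by (rule quantum_coloring_quadratic_form[OF col]) (use supp in \<open>auto simp: K_def\<close>)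
  moreover have "form = (\<Sum>h\<in>{1..c}. \<Sum>a<d. of_real (\<Sum>i<n. (\<mu> i - t) * (cmod (\<Sum>u<n. of_real (q i u) * G h u a))\<^sup>2))"
    unfolding form_def
  proof (rule sum.cong[OF refl], rule sum.cong[OF refl])
    fix h a
    have "(\<Sum>u<n. \<Sum>v<n. of_real (K u v) * (cnj (G h u a) * G h v a))
        = (\<Sum>u<n. \<Sum>v<n. of_real (\<Sum>i<n. (\<mu> i - t) * q i u * q i v) * (cnj (G h u a) * G h v a))"
      by (intro sum.cong refl) (simp add: K)
    then show "(\<Sum>u<n. \<Sum>v<n. of_real (K u v) * (cnj (G h u a) * G h v a))
        = of_real (\<Sum>i<n. (\<mu> i - t) * (cmod (\<Sum>u<n. of_real (q i u) * G h u a))\<^sup>2)"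
      unfolding spectral_quadratic_form .
  qed
  ultimately have "(of_real (\<Sum>h\<in>{1..c}. \<Sum>a<d. \<Sum>i<n. (\<mu> i - t) * (cmod (\<Sum>u<n. of_real (q i u) * G h u a))\<^sup>2) :: complex)
      = of_real (\<Sum>u<n. K u u * (\<Sum>b<d. (cmod (F u b))\<^sup>2))"
    by simp
  then have "(\<Sum>h\<in>{1..c}. \<Sum>a<d. \<Sum>i<n. (\<mu> i - t) * (cmod (\<Sum>u<n. of_real (q i u) * G h u a))\<^sup>2)
      = (\<Sum>u<n. K u u * (\<Sum>b<d. (cmod (F u b))\<^sup>2))"
    by (simp only: of_real_eq_iff)
  also have "\<dots> \<ge> 0" using diag by (auto simp: K_def intro!: sum_nonneg mult_nonneg_nonneg)
  finally show ?thesis .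
qed

lemma quantum_coloring_spectral_vanishing:
  fixes M q :: "nat \<Rightarrow> nat \<Rightarrow> real" and \<mu> :: "nat \<Rightarrow> real" and F :: "nat \<Rightarrow> nat \<Rightarrow> complex"
  assumes complete: "\<And>u v. u < n \<Longrightarrow> v < n \<Longrightarrow> (\<Sum>i<n. q i u * q i v) = (if u = v then 1 else 0)"
    and M: "\<And>u v. u < n \<Longrightarrow> v < n \<Longrightarrow> M u v = (\<Sum>i<n. \<mu> i * q i u * q i v)"
    and supp: "\<And>u v. u < n \<Longrightarrow> v < n \<Longrightarrow> u \<noteq> v \<Longrightarrow> M u v \<noteq> 0 \<Longrightarrow> dist_le E k u v"
    and diag: "\<And>u. u < n \<Longrightarrow> t \<le> M u u"
    and col: "quantum_kdist_coloring n E k c d P"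
    and constraint: "\<And>h a i. h \<in> {1..c} \<Longrightarrow> a < d \<Longrightarrow> i < n \<Longrightarrow> t \<le> \<mu> i \<Longrightarrow>
                        (\<Sum>u<n. of_real (q i u) * (\<Sum>b<d. P u h $$ (a,b) * F u b)) = 0"
    and u: "u < n" and b: "b < d"
  shows "F u b = 0"
proof -
  define G where "G h u a = (\<Sum>b<d. P u h $$ (a,b) * F u b)" for h u a
  define coord where "coord h a i = (\<Sum>u<n. of_real (q i u) * G h u a)" for h a i
  define summand where "summand = (\<lambda>(h,a,i). (\<mu> i - t) * (cmod (coord h a i))\<^sup>2)"
  define I where "I = {1..c} \<times> {..<d} \<times> {..<n}"
  have "0 \<le> (\<Sum>h\<in>{1..c}. \<Sum>a<d. \<Sum>i<n. (\<mu> i - t) * (cmod (coord h a i))\<^sup>2)"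
    unfolding coord_def G_def
    by (rule quantum_coloring_spectral_form_nonneg) (fact complete M supp diag col)+
  then have summand_sum_nonneg: "0 \<le> sum summand I"
    by (simp add: summand_def I_def sum.cartesian_product)
  have coord_constraint: "coord h a i = 0" if "h \<in> {1..c}" "a < d" "i < n" "t \<le> \<mu> i" for h a i
    using constraint[OF that] by (simp add: coord_def G_def)
  have summand_nonpos: "summand x \<le> 0" if "x \<in> I" for x
  proof -
    obtain h a i where x: "x = (h,a,i)" "h \<in> {1..c}" "a < d" "i < n"
      using \<open>x \<in> I\<close> by (auto simp: I_def)
    show ?thesis
      using coord_constraint[OF x(2-4)] by (cases "t \<le> \<mu> i") (auto simp: x summand_def mult_nonpos_nonneg)
  qed
  then have "(\<Sum>x\<in>I. - summand x) = 0"
    using summand_sum_nonneg sum_nonpos[of I summand] by (simp add: sum_negf)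
  then have summand_zero: "\<forall>x\<in>I. summand x = 0"
    by (subst (asm) sum_nonneg_eq_0_iff) (auto simp: I_def summand_nonpos)
  have coord_zero: "coord h a i = 0" if "h \<in> {1..c}" "a < d" "i < n" for h a i
  proof (cases "t \<le> \<mu> i")
    case False
    then have "summand (h,a,i) = 0" "\<mu> i - t \<noteq> 0" using summand_zero that by (auto simp: I_def)
    then show ?thesis by (simp add: summand_def)
  qed (use coord_constraint that in blast)
  have G_zero: "G h u a = 0" if "h \<in> {1..c}" "a < d" for h a
  proof (rule orthogonal_coordinates_zero[where g = "\<lambda>v. G h v a"])
    show "(\<Sum>v<n. of_real (q i v) * G h v a) = 0" if "i < n" for i
      using coord_zero[OF \<open>h \<in> {1..c}\<close> \<open>a < d\<close> that] by (simp add: coord_def)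
  qed (fact complete u)+
  have "F u b = (\<Sum>h\<in>{1..c}. G h u b)"
    using quantum_coloring_resolves_identity[OF col u b] by (simp add: G_def)
  also have "\<dots> = 0" by (intro sum.neutral) (simp add: G_zero b)
  finally show ?thesis .
qed

lemma quantum_coloring_eigenvalue_count:
  fixes M q :: "nat \<Rightarrow> nat \<Rightarrow> real" and \<mu> :: "nat \<Rightarrow> real"
  assumes complete: "\<And>u v. u < n \<Longrightarrow> v < n \<Longrightarrow> (\<Sum>i<n. q i u * q i v) = (if u = v then 1 else 0)"
    and M: "\<And>u v. u < n \<Longrightarrow> v < n \<Longrightarrow> M u v = (\<Sum>i<n. \<mu> i * q i u * q i v)"
    and supp: "\<And>u v. u < n \<Longrightarrow> v < n \<Longrightarrow> u \<noteq> v \<Longrightarrow> M u v \<noteq> 0 \<Longrightarrow> dist_le E k u v"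
    and diag: "\<And>u. u < n \<Longrightarrow> t \<le> M u u"
    and col: "quantum_kdist_coloring n E k c d P" and "d > 0"
  shows "n \<le> c * card {i. i < n \<and> t \<le> \<mu> i}"
proof (rule ccontr)
  define S where "S = {i. i < n \<and> t \<le> \<mu> i}"
  define R where "R = {1..c} \<times> {..<d} \<times> S"
  define X where "X = {..<n} \<times> {..<d}"
  assume "\<not> n \<le> c * card {i. i < n \<and> t \<le> \<mu> i}"
  then have "c * card S * d < n * d" using \<open>d > 0\<close> unfolding S_def by simp
  then have "card R < card X" by (simp add: R_def X_def card_cartesian_product mult_ac)
  moreover have "finite R" by (simp add: R_def S_def)
  ultimately obtain F' where F': "\<exists>x\<in>X. F' x \<noteq> 0"
    and eqs: "\<forall>(h,a,i)\<in>R. (\<Sum>(u,b)\<in>X. of_real (q i u) * P u h $$ (a,b) * F' (u,b)) = 0"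
    using homogeneous_system_nontrivial_solution[of R X "\<lambda>(h,a,i) (u,b). of_real (q i u) * P u h $$ (a,b)"]
    by (force simp: X_def case_prod_unfold)
  have "F' (u,b) = 0" if "u < n" "b < d" for u b
  proof (rule quantum_coloring_spectral_vanishing[where F = "\<lambda>u b. F' (u,b)"])
    fix h a i assume "h \<in> {1..c}" "a < d" "i < n" "t \<le> \<mu> i"
    then have "(\<Sum>(u,b)\<in>X. of_real (q i u) * P u h $$ (a,b) * F' (u,b)) = 0"
      using eqs by (auto simp: R_def S_def)
    then show "(\<Sum>u<n. of_real (q i u) * (\<Sum>b<d. P u h $$ (a,b) * F' (u,b))) = 0"
      by (simp add: X_def sum.cartesian_product sum_distrib_left mult.assoc)
  qed (fact complete M supp diag col that)+
  then show False using F' by (auto simp: X_def)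
qed

lemma quantum_kdist_coloring_classical:
  "quantum_kdist_coloring n E k n 1 (\<lambda>v h. if h = Suc v then 1\<^sub>m 1 else 0\<^sub>m 1 1)"
proof -
  have "orth_projector 1 (1\<^sub>m 1 :: complex mat)" "orth_projector 1 (0\<^sub>m 1 1 :: complex mat)"
    unfolding orth_projector_def conj_transp_def by (auto intro!: eq_matI)
  moreover have "(\<Sum>h\<in>{1..n}. (if h = Suc v then 1\<^sub>m 1 else 0\<^sub>m 1 1 :: complex mat) $$ (0,0)) = 1"
    if "v < n" for v
  proof -
    have "(\<Sum>h\<in>{1..n}. (if h = Suc v then 1\<^sub>m 1 else 0\<^sub>m 1 1 :: complex mat) $$ (0,0))
        = (\<Sum>h\<in>{1..n}. if h = Suc v then 1 else 0)"
      by (rule sum.cong) auto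
    then show ?thesis using that by simp
  qed
  ultimately show ?thesis
    unfolding quantum_kdist_coloring_def by auto
qed

lemma quantum_kdist_chromatic_attained:
  "\<exists>d>0. \<exists>P. quantum_kdist_coloring n E k (quantum_kdist_chromatic n E k) d P"
  unfolding quantum_kdist_chromatic_def
  by (rule LeastI_ex) (use quantum_kdist_coloring_classical in blast)

section \<open>Adjacency matrices\<close>

lemma adj_matrix_symmetric:
  assumes "simple_graph n E" "u < n" "v < n"
  shows "adj_matrix n E $$ (u,v) = adj_matrix n E $$ (v,u)"
  using assms by (auto simp: adj_matrix_def simple_graph_def)

lemma adj_matrix_pow_nonzero_imp_relpowp:
  assumes u: "u < n" and "v < n" and "(adj_matrix n E ^\<^sub>m j) $$ (u,v) \<noteq> 0"
  shows "(E ^^ j) u v"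
  using assms(2,3)
proof (induction j arbitrary: v)
  case 0
  then show ?case using u by (auto simp: adj_matrix_def split: if_splits)
next
  case (Suc j)
  let ?A = "adj_matrix n E"
  have "(?A ^\<^sub>m Suc j) $$ (u,v) = (\<Sum>w<n. (?A ^\<^sub>m j) $$ (u,w) * ?A $$ (w,v))"
    using u Suc.prems(1) by (auto simp: adj_matrix_def scalar_prod_def atLeast0LessThan intro!: sum.cong)
  with Suc.prems(2) obtain w where w: "w < n" "(?A ^\<^sub>m j) $$ (u,w) * ?A $$ (w,v) \<noteq> 0"
    by (metis (no_types, lifting) lessThan_iff sum.neutral)
  then have "(E ^^ j) u w" "E w v"
    using Suc.IH[of w] Suc.prems(1) by (auto simp: adj_matrix_def split: if_splits)
  then show ?case by (rule relpowp_Suc_I)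
qed

lemma poly_mat_adj_matrix_nonzero_imp_dist_le:
  assumes "degree p \<le> k" and u: "u < n" and v: "v < n"
    and "poly_mat p (adj_matrix n E) $$ (u,v) \<noteq> 0"
  shows "dist_le E k u v"
proof -
  have "(\<Sum>j\<le>degree p. coeff p j * (adj_matrix n E ^\<^sub>m j) $$ (u,v)) \<noteq> 0"
    using assms(4) u v by (simp add: poly_mat_def adj_matrix_def)
  then obtain j where "j \<le> degree p" "(adj_matrix n E ^\<^sub>m j) $$ (u,v) \<noteq> 0"
    by (metis (no_types, lifting) atMost_iff mult_zero_right sum.neutral)
  then have "j \<le> k" "(E ^^ j) u v"
    using adj_matrix_pow_nonzero_imp_relpowp[OF u v] assms(1) by auto
  then show ?thesis unfolding dist_le_def by blast
qed

lemma adj_matrix_poly_eigenvalue_count: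
  assumes G: "simple_graph n E" and deg: "degree p \<le> k"
    and cp: "char_poly (adj_matrix n E) = (\<Prod>l\<leftarrow>lam. [:- l, 1:])"
    and diag: "\<And>u. u < n \<Longrightarrow> t \<le> poly_mat p (adj_matrix n E) $$ (u,u)"
    and col: "quantum_kdist_coloring n E k c d P" and "d > 0"
  shows "n \<le> c * card {i. i < n \<and> t \<le> poly p (lam ! i)}"
proof -
  let ?A = "adj_matrix n E"
  have A: "?A \<in> carrier_mat n n" by (simp add: adj_matrix_def)
  have A_sym: "\<And>u v. u < n \<Longrightarrow> v < n \<Longrightarrow> ?A $$ (u,v) = ?A $$ (v,u)"
    by (rule adj_matrix_symmetric[OF G])
  obtain q \<nu> where eig: "eigen_family ?A n n q \<nu>"
    and complete: "\<And>u v. u < n \<Longrightarrow> v < n \<Longrightarrow> (\<Sum>i<n. q i u * q i v) = (if u = v then 1 else 0)"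
    and spectrum: "mset (map \<nu> [0..<n]) = mset lam"
    using symmetric_mat_spectral_decomposition[OF A A_sym cp] by blast
  have "n \<le> c * card {i. i < n \<and> t \<le> poly p (\<nu> i)}"
  proof (rule quantum_coloring_eigenvalue_count[where M = "\<lambda>u v. poly_mat p ?A $$ (u,v)"])
    show "poly_mat p ?A $$ (u,v) = (\<Sum>i<n. poly p (\<nu> i) * q i u * q i v)" if "u < n" "v < n" for u v
      by (rule poly_mat_spectral[OF A _ eig]) (use A_sym complete that in auto)
    show "dist_le E k u v" if "u < n" "v < n" "poly_mat p ?A $$ (u,v) \<noteq> 0" for u v
      using poly_mat_adj_matrix_nonzero_imp_dist_le[OF deg that] .
  qed (fact complete diag col \<open>d > 0\<close>)+
  then show ?thesis using card_index_filter_mset_eq[OF spectrum, of "\<lambda>l. t \<le> poly p l"] by simp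
qed

theorem theorem4p1:
  fixes n k :: nat and E :: "nat \<Rightarrow> nat \<Rightarrow> bool" and p :: "real poly"
    and lam :: "real list"
  assumes "simple_graph n E"
    and "k \<ge> 1"
    and "degree p \<le> k"
    and "length lam = n" and "sorted_wrt (\<ge>) lam"
    and "char_poly (adj_matrix n E) = (\<Prod>l\<leftarrow>lam. [:- l, 1:])"
  shows "let A = adj_matrix n E;
             W = Max ((\<lambda>u. poly_mat p A $$ (u,u)) ` {0..<n});
             w = Min ((\<lambda>u. poly_mat p A $$ (u,u)) ` {0..<n})
         in real (quantum_kdist_chromatic n E k) \<ge>
            real n / real (min (card {i. i < n \<and> poly p (lam ! i) \<ge> w})
                                (card {i. i < n \<and> poly p (lam ! i) \<le> W}))"
proof -
  define A where "A = adj_matrix n E"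
  define W where "W = Max ((\<lambda>u. poly_mat p A $$ (u,u)) ` {0..<n})"
  define w where "w = Min ((\<lambda>u. poly_mat p A $$ (u,u)) ` {0..<n})"
  define \<chi> where "\<chi> = quantum_kdist_chromatic n E k"
  define m where "m = min (card {i. i < n \<and> poly p (lam ! i) \<ge> w}) (card {i. i < n \<and> poly p (lam ! i) \<le> W})"
  obtain d P where "d > 0" and col: "quantum_kdist_coloring n E k \<chi> d P"
    using quantum_kdist_chromatic_attained unfolding \<chi>_def by blast
  have "n \<le> \<chi> * card {i. i < n \<and> w \<le> poly p (lam ! i)}"
    by (rule adj_matrix_poly_eigenvalue_count[OF assms(1,3,6) _ col \<open>d > 0\<close>])
       (simp add: w_def A_def)
  moreover have "n \<le> \<chi> * card {i. i < n \<and> - W \<le> poly (- p) (lam ! i)}"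
    by (rule adj_matrix_poly_eigenvalue_count[OF assms(1) _ assms(6) _ col \<open>d > 0\<close>])
       (use assms(3) in \<open>simp_all add: W_def A_def poly_mat_uminus_entry adj_matrix_def\<close>)
  ultimately have "real n \<le> real \<chi> * real m"
    unfolding m_def by (simp add: min_def flip: of_nat_mult)
  then have "real n / real m \<le> real \<chi>"
    by (cases "m = 0") (simp_all add: pos_divide_le_eq)
  then show ?thesis unfolding Let_def m_def w_def W_def A_def \<chi>_def .
qed

end
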